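(* Let $\mathsf{T}$ be a rooted plane tree with $n\geq 2$ nodes and root $\mathfrak{r}$. Let $C^*\in\mathcal{M}_\mathsf{T}$ be a maximal chain with $|C^*|+f_{C^*}(\mathfrak{r})=\max_{C\in\mathcal{M}_\mathsf{T}}(|C|+f_C(\mathfrak{r}))$, and let $k=f_{C^*}(\mathfrak{r})$. Let $v_0=\mathfrak{r},v_1,\dots,v_{|C^*|-1}$ be the nodes of $C^*$ from top to bottom. For $0\leq i\leq|C^*|-2$, let $B_i=\{u\in\mathsf{T}\setminus C^*:u\leq_\mathsf{T} v_i,\ u\not\leq_\mathsf{T} v_{i+1}\}$. Define a partial order $\sqsubseteq$ on $\mathsf{T}\setminus C^*$ by: for $x\in B_i$, $y\in B_j$, if $i>j$ then $x\sqsubseteq y$; if $i=j$ then $x\sqsubseteq y$ iff $x\geq_\mathsf{T} y$. Let $v_{|C^*|},v_{|C^*|+1},\dots,v_{|\mathsf{T}|-1}$ be an ordering of $\mathsf{T}\setminus C^*$ such that $a\leq b$ whenever $v_a\sqsubseteq v_b$. Then for each integer $0\leq i<k$, the nodes $v_{|C^*|},v_{|C^*|+1},\dots,v_{|C^*|+k-i-1}$ are descendants of $v_{i+1}$.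
   Context: A rooted plane tree $\mathsf{T}$ is a finite tree with a distinguished root $\mathfrak{r}$, regarded as a poset $\leq_\mathsf{T}$ in which $v'\leq_\mathsf{T} v$ iff $v$ lies on the path from $v'$ to $\mathfrak{r}$. $\Delta_\mathsf{T}(v)=\{v':v'\leq_\mathsf{T} v\}$; a descendant of $v$ is an element of $\Delta_\mathsf{T}(v)\setminus\{v\}$; a leaf is a node with no descendants. $\mathcal{M}_\mathsf{T}$ is the set of maximal chains of $\mathsf{T}$ (paths from a leaf to the root). For $C\in\mathcal{M}_\mathsf{T}$ and $v\in C$: $\mathrm{height}_C(v)$ is the number of elements of $C$ strictly below $v$; if $v$ is not a leaf, $\mathrm{ch}_C(v)$ is the unique element of $C$ covered by $v$; $b_C(v)=|\Delta_\mathsf{T}(v)|-\mathrm{height}_C(v)-1$. The function $f_C\colon C\to\mathbb{Z}_{\geq 0}$ is defined recursively: $f_C(v)=0$ if $v$ is a leaf; otherwise, with $w=\mathrm{ch}_C(v)$, $f_C(v)=f_C(w)+1$ if $f_C(w)+1\leq b_C(w)$, and $f_C(v)=f_C(w)$ otherwise. *)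

theory Defs
  imports Main
begin

text \<open>A rooted tree on a finite node set V with root r, given by a parent map p
  (with the convention p r = r). The plane structure (ordering of children)
  plays no role in the statement and is omitted.\<close>

definition rooted_tree :: "'a set \<Rightarrow> 'a \<Rightarrow> ('a \<Rightarrow> 'a) \<Rightarrow> bool" where
  "rooted_tree V r p \<longleftrightarrow> finite V \<and> r \<in> V \<and> p r = r \<and> (\<forall>v\<in>V. p v \<in> V)
     \<and> (\<forall>v\<in>V. \<exists>k. (p ^^ k) v = r)"

definition tle :: "'a set \<Rightarrow> ('a \<Rightarrow> 'a) \<Rightarrow> 'a \<Rightarrow> 'a \<Rightarrow> bool" where
  "tle V p x y \<longleftrightarrow> x \<in> V \<and> y \<in> V \<and> (\<exists>k. (p ^^ k) x = y)"

definition Delta :: "'a set \<Rightarrow> ('a \<Rightarrow> 'a) \<Rightarrow> 'a \<Rightarrow> 'a set" where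
  "Delta V p v = {u. tle V p u v}"

definition is_leaf :: "'a set \<Rightarrow> ('a \<Rightarrow> 'a) \<Rightarrow> 'a \<Rightarrow> bool" where
  "is_leaf V p v \<longleftrightarrow> v \<in> V \<and> Delta V p v = {v}"

definition max_chains :: "'a set \<Rightarrow> ('a \<Rightarrow> 'a) \<Rightarrow> 'a set set" where
  "max_chains V p = {{u. tle V p l u} | l. is_leaf V p l}"

definition heightC :: "'a set \<Rightarrow> ('a \<Rightarrow> 'a) \<Rightarrow> 'a set \<Rightarrow> 'a \<Rightarrow> nat" where
  "heightC V p C v = card {u \<in> C. tle V p u v \<and> u \<noteq> v}"

definition bC :: "'a set \<Rightarrow> ('a \<Rightarrow> 'a) \<Rightarrow> 'a set \<Rightarrow> 'a \<Rightarrow> int" where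
  "bC V p C v = int (card (Delta V p v)) - int (heightC V p C v) - 1"

text \<open>f_C evaluated at the element of C of height j; the element of height j
  is ch_C of the element of height j+1.\<close>
fun fh :: "'a set \<Rightarrow> ('a \<Rightarrow> 'a) \<Rightarrow> 'a set \<Rightarrow> nat \<Rightarrow> nat" where
  "fh V p C 0 = 0"
| "fh V p C (Suc j) =
     (let w = (THE w. w \<in> C \<and> heightC V p C w = j)
      in if int (fh V p C j) + 1 \<le> bC V p C w then fh V p C j + 1 else fh V p C j)"

definition fC :: "'a set \<Rightarrow> ('a \<Rightarrow> 'a) \<Rightarrow> 'a set \<Rightarrow> 'a \<Rightarrow> nat" where
  "fC V p C v = fh V p C (heightC V p C v)"

definition Bblock :: "'a set \<Rightarrow> ('a \<Rightarrow> 'a) \<Rightarrow> 'a set \<Rightarrow> (nat \<Rightarrow> 'a) \<Rightarrow> nat \<Rightarrow> 'a set" where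
  "Bblock V p C v i = {u \<in> V - C. tle V p u (v i) \<and> \<not> tle V p u (v (Suc i))}"

definition sqle :: "'a set \<Rightarrow> ('a \<Rightarrow> 'a) \<Rightarrow> 'a set \<Rightarrow> (nat \<Rightarrow> 'a) \<Rightarrow> 'a \<Rightarrow> 'a \<Rightarrow> bool" where
  "sqle V p C v x y \<longleftrightarrow> (\<exists>i j. i + 2 \<le> card C \<and> j + 2 \<le> card C \<and>
      x \<in> Bblock V p C v i \<and> y \<in> Bblock V p C v j \<and>
      (j < i \<or> (i = j \<and> tle V p y x)))"

end

theory Submission
  imports Defs
begin

(* Let D be the set of descendants of v_(i+1) off the chain C.  Along C the numbers
   b_C count exactly the off-chain descendants, so they decrease downwards, and f_C
   grows by at most one per step and never exceeds b_C of the child it comes from.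
   Hence k = f_C(r) <= f_C(v_i) + i <= |D| + i.  In the order on T \ C every element
   of D precedes every other off-chain node (D lies in blocks B_a with a > i, the
   other nodes in blocks B_b with b <= i), so D fills the first |D| >= k - i
   positions after the chain. *)

lemma funpow_fixed_point: "f x = x \<Longrightarrow> (f ^^ n) x = x"
  by (induction n) auto

lemma tle_refl: "x \<in> V \<Longrightarrow> tle V p x x"
  unfolding tle_def by (auto intro: exI[of _ 0])

lemma tle_trans: "tle V p x y \<Longrightarrow> tle V p y z \<Longrightarrow> tle V p x z"
  unfolding tle_def by (metis comp_apply funpow_add)

lemma tle_parent: "x \<in> V \<Longrightarrow> p x \<in> V \<Longrightarrow> tle V p x (p x)"
  unfolding tle_def by (auto intro: exI[of _ 1])

lemma mem_Delta_iff: "x \<in> Delta V p y \<longleftrightarrow> tle V p x y"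
  by (simp add: Delta_def)

lemma Delta_subset: "Delta V p y \<subseteq> V"
  by (auto simp: Delta_def tle_def)

lemma tle_antisym:
  assumes tree: "rooted_tree V r p" and xy: "tle V p x y" and yx: "tle V p y x"
  shows "x = y"
proof -
  obtain a b where a: "(p ^^ a) x = y" and b: "(p ^^ b) y = x" and x: "x \<in> V"
    using xy yx unfolding tle_def by auto
  obtain K where K: "(p ^^ K) x = r"
    using tree x unfolding rooted_tree_def by auto
  have r_fixed: "(p ^^ n) r = r" for n
    using tree by (intro funpow_fixed_point) (simp add: rooted_tree_def)
  show ?thesis
  proof (cases "b + a = 0")
    case True
    then show ?thesis using a by simp
  next
    case False
    have "(p ^^ (b + a)) x = x"
      using a b by (simp add: funpow_add)
    then have "(p ^^ ((b + a) * K)) x = x"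
      by (metis funpow_mult funpow_fixed_point)
    moreover have "K \<le> (b + a) * K"
      using False by auto
    then have "(b + a) * K = ((b + a) * K - K) + K"
      by simp
    ultimately have "x = r"
      using K r_fixed by (metis comp_apply funpow_add)
    then show ?thesis
      using a r_fixed by simp
  qed
qed

lemma enumeration_initial_segment:
  assumes D: "D \<subseteq> v ` {m..<N}"
    and first: "\<And>a b. a \<in> {m..<N} \<Longrightarrow> b \<in> {m..<N} \<Longrightarrow> v a \<in> D \<Longrightarrow> v b \<notin> D \<Longrightarrow> a \<le> b"
    and j: "m \<le> j" "j < m + card D"
  shows "v j \<in> D"
proof (rule ccontr)
  assume j_notin: "v j \<notin> D"
  have "card D \<le> card (v ` {m..<N})"
    using D by (simp add: card_mono)
  also have "\<dots> \<le> N - m"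
    using card_image_le[of "{m..<N}" v] by simp
  finally have "j < N"
    using j by linarith
  have "D \<subseteq> v ` {m..<j}"
  proof
    fix x assume x: "x \<in> D"
    then obtain a where a: "a \<in> {m..<N}" "x = v a"
      using D by auto
    then have "a \<le> j" "a \<noteq> j"
      using first[of a j] x j_notin j \<open>j < N\<close> by auto
    then show "x \<in> v ` {m..<j}"
      using a by auto
  qed
  then have "card D \<le> card (v ` {m..<j})"
    by (simp add: card_mono)
  also have "\<dots> \<le> j - m"
    using card_image_le[of "{m..<j}" v] by simp
  finally show False
    using j by linarith
qed

lemma fh_add_le: "fh V p C (s + d) \<le> fh V p C s + d"
  by (induction d) (auto simp: Let_def)

locale chain_enumeration =
  fixes V :: "'a set" and r :: 'a and p :: "'a \<Rightarrow> 'a" and C :: "'a set" and v :: "nat \<Rightarrow> 'a"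
  assumes tree: "rooted_tree V r p"
    and chain: "C \<in> max_chains V p"
    and bij: "bij_betw v {0..<card V} V"
    and top: "v 0 = r"
    and v_in_chain: "\<And>i. i < card C \<Longrightarrow> v i \<in> C"
    and parent: "\<And>i. Suc i < card C \<Longrightarrow> p (v (Suc i)) = v i"
begin

lemma finite_V: "finite V"
  using tree by (simp add: rooted_tree_def)

lemma finite_Delta: "finite (Delta V p x)"
  using finite_V Delta_subset by (rule finite_subset[rotated])

lemma chain_leafE:
  obtains l where "is_leaf V p l" "C = {u. tle V p l u}"
  using chain unfolding max_chains_def by auto

lemma chain_subset: "C \<subseteq> V"
  using chain_leafE by (auto simp: tle_def)

lemma finite_chain: "finite C"
  using chain_subset finite_V by (rule finite_subset)

lemma card_chain_le: "card C \<le> card V"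
  using chain_subset finite_V by (rule card_mono[rotated])

lemma v_in_V: "i < card V \<Longrightarrow> v i \<in> V"
  using bij by (auto simp: bij_betw_def)

lemma v_inj: "inj_on v {0..<card V}"
  using bij by (simp add: bij_betw_def)

lemma v_inj_chain: "inj_on v {a..<card C}"
  using card_chain_le by (intro inj_on_subset[OF v_inj]) auto

lemma chain_eq_image: "C = v ` {0..<card C}"
proof -
  have "card (v ` {0..<card C}) = card C"
    using v_inj_chain by (simp add: card_image)
  moreover have "v ` {0..<card C} \<subseteq> C"
    using v_in_chain by auto
  ultimately show ?thesis
    using finite_chain by (metis card_subset_eq)
qed

lemma offchain_eq_image: "V - C = v ` {card C..<card V}"
proof -
  have "V - C = v ` {0..<card V} - v ` {0..<card C}"
    using bij by (simp add: bij_betw_def flip: chain_eq_image)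
  also have "\<dots> = v ` ({0..<card V} - {0..<card C})"
    using v_inj card_chain_le by (intro inj_on_image_set_diff[symmetric]) auto
  also have "{0..<card V} - {0..<card C} = {card C..<card V}"
    by auto
  finally show ?thesis .
qed

lemma leaf_in_chain: "is_leaf V p l \<Longrightarrow> C = {u. tle V p l u} \<Longrightarrow> l \<in> C"
  by (simp add: is_leaf_def tle_refl)

lemma card_chain_pos: "0 < card C"
  using chain_leafE leaf_in_chain finite_chain by (metis card_gt_0_iff empty_iff)

lemma tle_chain:
  assumes "a \<le> b" "b < card C"
  shows "tle V p (v b) (v a)"
  using assms
proof (induction b rule: dec_induct)
  case base
  then show ?case
    using card_chain_le v_in_V by (simp add: tle_refl)
next
  case (step n)
  have "Suc n < card V"
    using step.prems card_chain_le by simp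
  then have "tle V p (v (Suc n)) (v n)"
    using tle_parent[of "v (Suc n)" V p] parent[of n] step.prems v_in_V[of n] v_in_V[of "Suc n"]
    by simp
  then show ?case
    using step tle_trans by simp
qed

lemma tle_chain_iff:
  assumes "a < card C" "b < card C"
  shows "tle V p (v b) (v a) \<longleftrightarrow> a \<le> b"
proof
  assume ba: "tle V p (v b) (v a)"
  show "a \<le> b"
  proof (rule ccontr)
    assume "\<not> a \<le> b"
    then have "v a = v b"
      using tle_antisym[OF tree ba] tle_chain assms by simp
    then show False
      using \<open>\<not> a \<le> b\<close> assms v_inj card_chain_le by (auto dest: inj_onD)
  qed
qed (use assms tle_chain in simp)

lemma Delta_inter_chain:
  assumes a: "a < card C"
  shows "Delta V p (v a) \<inter> C = v ` {a..<card C}"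
proof -
  have "Delta V p (v a) \<inter> v ` {0..<card C} = v ` {a..<card C}"
    using tle_chain_iff[OF a] by (auto simp: mem_Delta_iff)
  then show ?thesis
    by (subst (1) chain_eq_image)
qed

lemma leaf_bottom: "Delta V p (v (card C - 1)) = {v (card C - 1)}"
proof -
  obtain l where l: "is_leaf V p l" "C = {u. tle V p l u}"
    by (rule chain_leafE)
  then have "l \<in> C"
    by (rule leaf_in_chain)
  then obtain a where a: "a < card C" "l = v a"
    using chain_eq_image[THEN equalityD1] by auto
  have "v (card C - 1) \<in> Delta V p l"
    using a tle_chain by (simp add: mem_Delta_iff)
  then have "v (card C - 1) = l"
    using l(1) by (simp add: is_leaf_def)
  then show ?thesis
    using l(1) by (simp add: is_leaf_def)
qed

lemma heightC_chain:
  assumes a: "a < card C"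
  shows "heightC V p C (v a) = card C - 1 - a"
proof -
  have "{u \<in> C. tle V p u (v a) \<and> u \<noteq> v a} = v ` {a..<card C} - {v a}"
    using Delta_inter_chain[OF a] by (auto simp: mem_Delta_iff)
  also have "\<dots> = v ` ({a..<card C} - {a})"
    using inj_on_image_set_diff[OF v_inj_chain[of a], of "{a..<card C}" "{a}"] a by simp
  also have "{a..<card C} - {a} = {Suc a..<card C}"
    by auto
  finally show ?thesis
    unfolding heightC_def using v_inj_chain by (simp add: card_image)
qed

lemma bC_chain:
  assumes a: "a < card C"
  shows "bC V p C (v a) = int (card (Delta V p (v a) - C))"
proof -
  have "card (Delta V p (v a) \<inter> C) = card C - a"
    using Delta_inter_chain[OF a] v_inj_chain by (simp add: card_image)
  then have "card (Delta V p (v a)) = card C - a + card (Delta V p (v a) - C)"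
    using card_Int_Diff[OF finite_Delta, of _ C] by simp
  then show ?thesis
    unfolding bC_def using heightC_chain[OF a] a by simp
qed

lemma card_offchain_Delta_antimono:
  assumes "a \<le> b" "b < card C"
  shows "card (Delta V p (v b) - C) \<le> card (Delta V p (v a) - C)"
proof -
  have "Delta V p (v b) - C \<subseteq> Delta V p (v a) - C"
    using tle_chain[OF assms] tle_trans by (auto simp: mem_Delta_iff)
  then show ?thesis
    using finite_Delta by (simp add: card_mono)
qed

lemma fh_Suc_chain:
  assumes "Suc t < card C"
  shows "fh V p C (Suc t) =
    (if fh V p C t + 1 \<le> card (Delta V p (v (card C - 1 - t)) - C)
     then fh V p C t + 1 else fh V p C t)"
proof -
  have "(THE w. w \<in> C \<and> heightC V p C w = t) = v (card C - 1 - t)"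
  proof (rule the_equality)
    show "v (card C - 1 - t) \<in> C \<and> heightC V p C (v (card C - 1 - t)) = t"
      using assms v_in_chain heightC_chain by simp
  next
    fix w assume w: "w \<in> C \<and> heightC V p C w = t"
    then obtain b where "b < card C" "w = v b"
      using chain_eq_image[THEN equalityD1] by auto
    then show "w = v (card C - 1 - t)"
      using w heightC_chain by auto
  qed
  then show ?thesis
    using assms bC_chain by (simp add: Let_def)
qed

lemma fh_le_offchain: "t < card C \<Longrightarrow> fh V p C t \<le> card (Delta V p (v (card C - 1 - t)) - C)"
proof (induction t)
  case (Suc t)
  then have "fh V p C (Suc t) \<le> card (Delta V p (v (card C - 1 - t)) - C)"
    using fh_Suc_chain by simp
  also have "\<dots> \<le> card (Delta V p (v (card C - 1 - Suc t)) - C)"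
    using Suc.prems by (intro card_offchain_Delta_antimono) auto
  finally show ?case .
qed simp

lemma fC_le_offchain_child:
  assumes "Suc a < card C"
  shows "fC V p C (v a) \<le> card (Delta V p (v (Suc a)) - C)"
proof -
  define t where "t = card C - 2 - a"
  have "heightC V p C (v a) = Suc t"
    using assms heightC_chain t_def by simp
  then have "fC V p C (v a) = fh V p C (Suc t)"
    by (simp only: fC_def)
  moreover have "card C - 1 - t = Suc a"
    using assms t_def by simp
  moreover have "Suc t < card C"
    using assms t_def by simp
  ultimately show ?thesis
    using fh_Suc_chain fh_le_offchain[of t] by simp
qed

lemma fC_root_le: "i < card C \<Longrightarrow> fC V p C r \<le> fC V p C (v i) + i"
  using fh_add_le[where s = "card C - 1 - i" and d = i] top heightC_chain[of 0] heightC_chain[of i]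
  by (simp add: fC_def)

lemma fC_root_offchain_bound:
  assumes "i < fC V p C r"
  shows "Suc i < card C" and "fC V p C r - i \<le> card (Delta V p (v (Suc i)) - C)"
proof -
  have "fC V p C (v (card C - 1)) = 0"
    using heightC_chain card_chain_pos by (simp add: fC_def)
  then have "fC V p C r \<le> card C - 1"
    using fC_root_le[of "card C - 1"] card_chain_pos by simp
  then show "Suc i < card C"
    using assms by simp
  then show "fC V p C r - i \<le> card (Delta V p (v (Suc i)) - C)"
    using fC_root_le[of i] fC_le_offchain_child[of i] by simp
qed

lemma Bblock_tle_chain_iff:
  assumes u: "u \<in> Bblock V p C v a" and a: "Suc a < card C" and c: "c < card C"
  shows "tle V p u (v c) \<longleftrightarrow> c \<le> a"
proof
  assume u_c: "tle V p u (v c)"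
  show "c \<le> a"
  proof (rule ccontr)
    assume "\<not> c \<le> a"
    then have "tle V p (v c) (v (Suc a))"
      using c by (intro tle_chain) auto
    then have "tle V p u (v (Suc a))"
      using u_c by (rule tle_trans[rotated])
    then show False
      using u by (simp add: Bblock_def)
  qed
next
  assume "c \<le> a"
  then have "tle V p (v a) (v c)"
    using a by (intro tle_chain) auto
  then show "tle V p u (v c)"
    using u by (auto simp: Bblock_def intro: tle_trans)
qed

lemma offchain_in_Bblock:
  assumes u: "u \<in> V - C"
  obtains a where "a + 2 \<le> card C" "u \<in> Bblock V p C v a"
proof -
  define S where "S = {c. c < card C \<and> tle V p u (v c)}"
  define a where "a = Max S"
  have "0 \<in> S"
    using tree u top card_chain_pos by (auto simp: S_def rooted_tree_def tle_def)
  moreover have "finite S"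
    by (simp add: S_def)
  ultimately have a_S: "a \<in> S" and a_max: "\<And>c. c \<in> S \<Longrightarrow> c \<le> a"
    unfolding a_def by (auto intro: Max_in Max_ge)
  have "a \<noteq> card C - 1"
    using a_S u leaf_bottom card_chain_pos v_in_chain
    by (auto simp: S_def mem_Delta_iff[symmetric])
  then have "a + 2 \<le> card C"
    using a_S by (auto simp: S_def)
  moreover have "\<not> tle V p u (v (Suc a))"
    using a_max[of "Suc a"] \<open>a + 2 \<le> card C\<close> by (auto simp: S_def)
  ultimately show ?thesis
    using that a_S u by (auto simp: S_def Bblock_def)
qed

lemma offchain_descendants_sqle:
  assumes i: "Suc i < card C"
    and x: "x \<in> Delta V p (v (Suc i)) - C"
    and y: "y \<in> V - C" "y \<notin> Delta V p (v (Suc i))"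
  shows "sqle V p C v x y"
proof -
  have "x \<in> V - C"
    using x Delta_subset[of V p "v (Suc i)"] by blast
  then obtain a where a: "a + 2 \<le> card C" "x \<in> Bblock V p C v a"
    by (rule offchain_in_Bblock)
  obtain b where b: "b + 2 \<le> card C" "y \<in> Bblock V p C v b"
    using y(1) by (rule offchain_in_Bblock)
  have "Suc i \<le> a"
    using Bblock_tle_chain_iff[OF a(2)] a(1) i x by (simp add: mem_Delta_iff)
  moreover have "b < Suc i"
    using Bblock_tle_chain_iff[OF b(2)] b(1) i y(2) by (simp add: mem_Delta_iff)
  ultimately show ?thesis
    unfolding sqle_def using a b by (intro exI[of _ a] exI[of _ b]) auto
qed

end

theorem lemma3p1:
  fixes V :: "'a set" and r :: 'a and p :: "'a \<Rightarrow> 'a"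
    and C :: "'a set" and v :: "nat \<Rightarrow> 'a" and k :: nat
  assumes tree: "rooted_tree V r p"
    and n2: "card V \<ge> 2"
    and Cmax: "C \<in> max_chains V p"
    and Copt: "\<forall>C' \<in> max_chains V p. card C' + fC V p C' r \<le> card C + fC V p C r"
    and kdef: "k = fC V p C r"
    and vbij: "bij_betw v {0..<card V} V"
    and v0: "v 0 = r"
    and vC: "\<forall>i < card C. v i \<in> C"
    and vdown: "\<forall>i. Suc i < card C \<longrightarrow> p (v (Suc i)) = v i"
    and vord: "\<forall>a b. card C \<le> a \<longrightarrow> a < card V \<longrightarrow> card C \<le> b \<longrightarrow> b < card V \<longrightarrow>
                 sqle V p C v (v a) (v b) \<longrightarrow> a \<le> b"
  shows "\<forall>i < k. \<forall>j. card C \<le> j \<and> j \<le> card C + k - i - 1 \<longrightarrow>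
           v j \<in> Delta V p (v (Suc i)) - {v (Suc i)}"
proof (intro allI impI)
  interpret chain_enumeration V r p C v
    using tree Cmax vbij v0 vC vdown by unfold_locales auto
  fix i j assume i: "i < k" and j: "card C \<le> j \<and> j \<le> card C + k - i - 1"
  define D where "D = Delta V p (v (Suc i)) - C"
  have i_chain: "Suc i < card C" and card_D: "k - i \<le> card D"
    using fC_root_offchain_bound i kdef by (auto simp: D_def)
  have "v j \<in> D"
  proof (rule enumeration_initial_segment)
    show "D \<subseteq> v ` {card C..<card V}"
      using Delta_subset[of V p "v (Suc i)"] offchain_eq_image by (auto simp: D_def)
    show "a \<le> b" if a: "a \<in> {card C..<card V}" and b: "b \<in> {card C..<card V}"
      and "v a \<in> D" "v b \<notin> D" for a b
    proof -
      have "v b \<in> V - C"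
        using b offchain_eq_image by simp
      then have "sqle V p C v (v a) (v b)"
        using offchain_descendants_sqle[OF i_chain] \<open>v a \<in> D\<close> \<open>v b \<notin> D\<close> by (simp add: D_def)
      then show "a \<le> b"
        using vord a b by simp
    qed
  qed (use j i card_D in auto)
  then show "v j \<in> Delta V p (v (Suc i)) - {v (Suc i)}"
    using i_chain v_in_chain by (auto simp: D_def)
qed

end
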